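(* Let $r\ge2$ and let $\tilde{\mathbf L}^{\mathrm{PD}}\in\mathbb R^{|\mathcal G_r|\times r!}$ be the matrix with rows indexed by $G\in\mathcal G_r$, columns indexed by $\sigma\in\Pi_r$, and entries \[ \tilde\ell^{\mathrm{PD}}(G,\sigma)=\sum_{i=1}^r\sum_{j=1}^{i-1}\Big(\mathbf 1\big((i,j)\in G\big)-\mathbf 1\big((j,i)\in G\big)\Big)\cdot\mathbf 1\big(\sigma(i)>\sigma(j)\big). \] Then $\operatorname{rank}(\tilde{\mathbf L}^{\mathrm{PD}})=\frac{r(r-1)}{2}$.
   Context: $\mathcal G_r$ is the set of all directed acyclic graphs on the vertex set $[r]=\{1,\dots,r\}$, viewed as sets of directed edges $(i,j)$; $\Pi_r$ is the set of all permutations (bijections) $\sigma:[r]\to[r]$, where $\sigma(i)$ is the position of element $i$; $\mathbf 1(\cdot)$ is the indicator function. *)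

theory Defs
  imports "HOL-Analysis.Analysis" "HOL-Combinatorics.Permutations" "HOL-Library.Function_Algebras"
begin

definition dags :: "nat \<Rightarrow> (nat \<times> nat) set set" where
  "dags r = {G. G \<subseteq> {1..r} \<times> {1..r} \<and> acyclic G}"

text \<open>Permutations of [r]; sigma i is the position of element i.\<close>
definition perms :: "nat \<Rightarrow> (nat \<Rightarrow> nat) set" where
  "perms r = {\<sigma>. \<sigma> permutes {1..r}}"

definition ind :: "bool \<Rightarrow> real" where
  "ind b = (if b then 1 else 0)"

definition lPD :: "nat \<Rightarrow> (nat \<times> nat) set \<Rightarrow> (nat \<Rightarrow> nat) \<Rightarrow> real" where
  "lPD r G \<sigma> = (\<Sum>i=1..r. \<Sum>j=1..i-1.
      (ind ((i,j) \<in> G) - ind ((j,i) \<in> G)) * ind (\<sigma> i > \<sigma> j))"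

definition row_PD :: "nat \<Rightarrow> (nat \<times> nat) set \<Rightarrow> ((nat \<Rightarrow> nat) \<Rightarrow> real)" where
  "row_PD r G = (\<lambda>\<sigma>. if \<sigma> \<in> perms r then lPD r G \<sigma> else 0)"

definition rank_PD :: "nat \<Rightarrow> nat" where
  "rank_PD r = vector_space.dim (\<lambda>(c::real) (f :: (nat \<Rightarrow> nat) \<Rightarrow> real). (\<lambda>x. c * f x))
                 (row_PD r ` dags r)"

end

theory Submission
  imports Defs
begin

(* Index the strictly lower triangle of [r] x [r] by the set
   Pairs r = {(i,j). 1 <= j < i <= r}, and for such a pair p = (i,j) let
   cmp r p be the column vector sigma |-> 1(sigma i > sigma j).  Then
   (1) every row of the matrix is a linear combination of the vectors cmp r p,
       namely with the coefficients 1((i,j) in G) - 1((j,i) in G);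
   (2) each cmp r p is itself a row, namely the row of the one-edge DAG {p};
   (3) the vectors cmp r p are linearly independent: for each pair p there are
       two permutations (putting j, i in positions 1, 2, resp. 2, 1) that agree
       on the relative order of every other pair, and a family of functions
       that can be "separated" in this way is independent.
   The argument does not need the hypothesis r >= 2 (for r < 2 both sides
   are 0). *)

lemma sum_fun_apply: "(sum g A) x = (\<Sum>a\<in>A. g a x)"
  for g :: "'b \<Rightarrow> 'c \<Rightarrow> 'd::comm_monoid_add"
  by (induction A rule: infinite_finite_induct) auto

interpretation vs: vector_space "\<lambda>(c::real) (f :: 'a \<Rightarrow> real). (\<lambda>x. c * f x)"
  by unfold_locales (auto simp: fun_eq_iff algebra_simps)

lemma separated_family_independent:
  fixes f :: "'i \<Rightarrow> 'a \<Rightarrow> real"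
  assumes fin: "finite I"
    and sep: "\<And>p. p \<in> I \<Longrightarrow> \<exists>x y. f p x \<noteq> f p y \<and> (\<forall>q\<in>I - {p}. f q x = f q y)"
  shows "inj_on f I" and "vs.independent (f ` I)"
proof -
  show inj: "inj_on f I"
  proof (rule inj_onI, rule ccontr)
    fix p q assume "p \<in> I" "q \<in> I" "f p = f q" "p \<noteq> q"
    then show False using sep[of p] by force
  qed
  show "vs.independent (f ` I)"
  proof (rule vs.independent_if_scalars_zero)
    show "finite (f ` I)" using fin by simp
  next
    fix u :: "('a \<Rightarrow> real) \<Rightarrow> real" and g
    assume comb: "(\<Sum>h\<in>f ` I. (\<lambda>x. u h * h x)) = 0" and "g \<in> f ` I"
    then obtain p where p: "p \<in> I" and g: "g = f p" by blast
    obtain x y where differ: "f p x \<noteq> f p y" and agree: "\<forall>q\<in>I - {p}. f q x = f q y"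
      using sep[OF p] by blast
    have vanish: "(\<Sum>q\<in>I. u (f q) * f q z) = 0" for z
      using fun_cong[OF comb, of z] inj by (simp add: sum_fun_apply sum.reindex)
    have "0 = (\<Sum>q\<in>I. u (f q) * f q x) - (\<Sum>q\<in>I. u (f q) * f q y)"
      using vanish by simp
    also have "\<dots> = (\<Sum>q\<in>I. u (f q) * (f q x - f q y))"
      by (simp add: sum_subtractf algebra_simps)
    also have "\<dots> = (\<Sum>q\<in>I. if q = p then u (f p) * (f p x - f p y) else 0)"
      by (rule sum.cong) (use agree in auto)
    also have "\<dots> = u (f p) * (f p x - f p y)" using p fin by simp
    finally show "u g = 0" using differ g by simp
  qed
qed

definition Pairs :: "nat \<Rightarrow> (nat \<times> nat) set" where
  "Pairs r = Sigma {1..r} (\<lambda>i. {1..i-1})"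

lemma finite_Pairs: "finite (Pairs r)"
  unfolding Pairs_def by auto

lemma Pairs_cases:
  assumes "p \<in> Pairs r"
  obtains i j where "p = (i, j)" "1 \<le> j" "j < i" "i \<le> r"
  using assms by (cases p) (auto simp: Pairs_def)

lemma card_Pairs: "2 * card (Pairs r) = r * (r - 1)"
proof (induction r)
  case 0 then show ?case by (simp add: Pairs_def)
next
  case (Suc r)
  have "Pairs (Suc r) = Pairs r \<union> ({Suc r} \<times> {1..r})"
    and "Pairs r \<inter> ({Suc r} \<times> {1..r}) = {}"
    by (auto simp: Pairs_def)
  then have "card (Pairs (Suc r)) = card (Pairs r) + r"
    using finite_Pairs by (simp add: card_Un_disjoint card_cartesian_product)
  then show ?case using Suc by (cases r) (auto simp: algebra_simps)
qed

definition cmp :: "nat \<Rightarrow> nat \<times> nat \<Rightarrow> (nat \<Rightarrow> nat) \<Rightarrow> real" where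
  "cmp r p = (\<lambda>\<sigma>. if \<sigma> \<in> perms r then ind (\<sigma> (fst p) > \<sigma> (snd p)) else 0)"

lemma row_PD_expansion:
  "row_PD r G = (\<Sum>p\<in>Pairs r. (\<lambda>\<sigma>. (ind (p \<in> G) - ind ((snd p, fst p) \<in> G)) * cmp r p \<sigma>))"
  by (auto simp: fun_eq_iff sum_fun_apply row_PD_def cmp_def lPD_def Pairs_def
      sum.Sigma split_def)

lemma rows_in_span: "row_PD r ` dags r \<subseteq> vs.span (cmp r ` Pairs r)"
proof
  fix x assume "x \<in> row_PD r ` dags r"
  then obtain G where x: "x = row_PD r G" by blast
  show "x \<in> vs.span (cmp r ` Pairs r)" unfolding x row_PD_expansion
    by (intro vs.span_sum vs.span_scale vs.span_base) auto
qed

lemma single_edge_dag: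
  assumes "p \<in> Pairs r" shows "{p} \<in> dags r"
proof -
  obtain i j where p: "p = (i, j)" and ij: "1 \<le> j" "j < i" "i \<le> r"
    using assms by (elim Pairs_cases)
  have "acyclic (insert (i, j) {})"
    using ij by (subst acyclic_insert) (auto simp: acyclic_def)
  then show ?thesis using p ij by (auto simp: dags_def)
qed

lemma row_PD_single_edge:
  assumes p: "p \<in> Pairs r" shows "row_PD r {p} = cmp r p"
proof -
  have "row_PD r {p} = (\<Sum>q\<in>Pairs r. if q = p then cmp r q else 0)"
    unfolding row_PD_expansion
  proof (rule sum.cong[OF refl])
    fix q assume "q \<in> Pairs r"
    then have "(snd q, fst q) \<noteq> p" using p by (auto elim!: Pairs_cases)
    then show "(\<lambda>\<sigma>. (ind (q \<in> {p}) - ind ((snd q, fst q) \<in> {p})) * cmp r q \<sigma>) =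
          (if q = p then cmp r q else 0)"
      by (auto simp: ind_def fun_eq_iff)
  qed
  also have "\<dots> = cmp r p"
    using p by (simp add: finite_Pairs)
  finally show ?thesis .
qed

lemma cmp_in_rows: "cmp r ` Pairs r \<subseteq> row_PD r ` dags r"
  using row_PD_single_edge single_edge_dag by (metis image_subset_iff rev_image_eqI)

lemma transpose12_order:
  fixes x y :: nat
  assumes "{x, y} \<noteq> {1, 2}" "x \<noteq> y"
  shows "(Transposition.transpose 1 2 x < Transposition.transpose 1 2 y) = (x < y)"
  using assms by (auto simp: Transposition.transpose_def doubleton_eq_iff)

text \<open>For p = (i,j), the permutation putting j and i at positions 1 and 2 and
  the permutation putting them at positions 2 and 1 order every other pair
  alike, so they separate cmp r p from all other comparison vectors.\<close>
lemma cmp_separated: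
  assumes p: "p \<in> Pairs r"
  shows "\<exists>\<sigma>\<^sub>1 \<sigma>\<^sub>2. cmp r p \<sigma>\<^sub>1 \<noteq> cmp r p \<sigma>\<^sub>2 \<and> (\<forall>q\<in>Pairs r - {p}. cmp r q \<sigma>\<^sub>1 = cmp r q \<sigma>\<^sub>2)"
proof -
  obtain i j where pe: "p = (i, j)" and ij: "1 \<le> j" "j < i" "i \<le> r"
    using p by (elim Pairs_cases)
  define \<sigma>\<^sub>1 where "\<sigma>\<^sub>1 = Transposition.transpose 2 i \<circ> Transposition.transpose 1 j"
  define \<sigma>\<^sub>2 where "\<sigma>\<^sub>2 = Transposition.transpose 1 2 \<circ> \<sigma>\<^sub>1"
  have perm1: "\<sigma>\<^sub>1 \<in> perms r" unfolding \<sigma>\<^sub>1_def perms_def mem_Collect_eq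
    using ij by (intro permutes_compose permutes_swap_id) auto
  have perm2: "\<sigma>\<^sub>2 \<in> perms r" unfolding \<sigma>\<^sub>2_def perms_def mem_Collect_eq
    using ij perm1 by (intro permutes_compose permutes_swap_id) (auto simp: perms_def)
  have at_j: "\<sigma>\<^sub>1 j = 1" and at_i: "\<sigma>\<^sub>1 i = 2"
    using ij by (auto simp: \<sigma>\<^sub>1_def Transposition.transpose_def)
  have inj1: "inj \<sigma>\<^sub>1" unfolding \<sigma>\<^sub>1_def by (simp add: inj_compose)
  then have onto12: "\<sigma>\<^sub>1 a = 1 \<longleftrightarrow> a = j" "\<sigma>\<^sub>1 a = 2 \<longleftrightarrow> a = i" for a
    using at_i at_j by (metis injD)+
  have "cmp r p \<sigma>\<^sub>1 \<noteq> cmp r p \<sigma>\<^sub>2"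
    using perm1 perm2 pe at_i at_j by (simp add: cmp_def ind_def \<sigma>\<^sub>2_def)
  moreover have "cmp r q \<sigma>\<^sub>1 = cmp r q \<sigma>\<^sub>2" if q: "q \<in> Pairs r - {p}" for q
  proof -
    obtain a b where qe: "q = (a, b)" and ab: "b < a" using q by (auto elim!: Pairs_cases)
    have "{\<sigma>\<^sub>1 b, \<sigma>\<^sub>1 a} \<noteq> {1, 2}" "\<sigma>\<^sub>1 b \<noteq> \<sigma>\<^sub>1 a"
      using q qe pe ab ij onto12 inj1 by (auto simp: doubleton_eq_iff dest: injD)
    then have "(\<sigma>\<^sub>2 b < \<sigma>\<^sub>2 a) = (\<sigma>\<^sub>1 b < \<sigma>\<^sub>1 a)"
      unfolding \<sigma>\<^sub>2_def o_def by (rule transpose12_order)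
    then show ?thesis using perm1 perm2 qe by (simp add: cmp_def)
  qed
  ultimately show ?thesis by blast
qed

theorem mainTheorem16:
  fixes r :: nat
  assumes "r \<ge> 2"
  shows "rank_PD r = r * (r - 1) div 2"
proof -
  have inj: "inj_on (cmp r) (Pairs r)" and indep: "vs.independent (cmp r ` Pairs r)"
    using separated_family_independent[OF finite_Pairs cmp_separated] by blast+
  have "rank_PD r = card (cmp r ` Pairs r)"
    unfolding rank_PD_def using cmp_in_rows rows_in_span indep by (rule vs.dim_unique) simp
  also have "\<dots> = card (Pairs r)"
    using inj by (simp add: card_image)
  finally show ?thesis using card_Pairs[of r] by simp
qed

end
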